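(* Let $\mu$ be an infinite cardinal, $\langle\mathbb{Q}_i:i\in I\rangle$ a sequence of posets such that each $\mathbb{Q}_i=\bigcup_{\zeta<\mu}Q_{i,\zeta}$ with each $Q_{i,\zeta}$ an $\mathrm{Fr}$-linked subset of $\mathbb{Q}_i$, and let $\mathbb{P}$ be the finite support product of $\langle\mathbb{Q}_i:i\in I\rangle$. Assume (i) $|I|\leq 2^\mu$, and (ii) for every finite $u\subseteq I$ and every $s:u\to\mu$, $\prod_{i\in u}Q_{i,s(i)}$ is $\mathrm{Fr}$-linked in $\prod_{i\in u}\mathbb{Q}_i$. Then $\mathbb{P}$ is $\mu$-$\mathrm{Fr}$-linked.
   Context: For a poset $\mathbb{P}$ and $\bar p=\langle p_n:n<\omega\rangle$ in $\mathbb{P}$, $\dot W(\bar p)$ names $\{n:p_n\in\dot G\}$. $Q\subseteq\mathbb{P}$ is $\mathrm{Fr}$-linked if for every sequence $\bar p$ in $Q$ some $q\in\mathbb{P}$ forces $\dot W(\bar p)$ infinite. $\mathbb{P}$ is $\mu$-$\mathrm{Fr}$-linked if it is a union of $\mu$ many $\mathrm{Fr}$-linked subsets. *)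

theory Defs
  imports Main
begin

text \<open>A forcing poset is given by a carrier set P and an order relation le,
  where le q p means q is stronger than (extends) p.\<close>

definition poset :: "'a set \<Rightarrow> ('a \<Rightarrow> 'a \<Rightarrow> bool) \<Rightarrow> bool" where
  "poset P le \<longleftrightarrow> (\<forall>p\<in>P. le p p)
     \<and> (\<forall>p\<in>P. \<forall>q\<in>P. \<forall>r\<in>P. le p q \<longrightarrow> le q r \<longrightarrow> le p r)
     \<and> (\<forall>p\<in>P. \<forall>q\<in>P. le p q \<longrightarrow> le q p \<longrightarrow> p = q)"

definition compat :: "'a set \<Rightarrow> ('a \<Rightarrow> 'a \<Rightarrow> bool) \<Rightarrow> 'a \<Rightarrow> 'a \<Rightarrow> bool" where
  "compat P le p q \<longleftrightarrow> (\<exists>r\<in>P. le r p \<and> le r q)"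

text \<open>q forces that W(pbar) = {n. p n in G} is infinite, expressed via the
  forcing relation: for every m, the set of p n with n at least m is predense below q.\<close>

definition forces_W_infinite ::
  "'a set \<Rightarrow> ('a \<Rightarrow> 'a \<Rightarrow> bool) \<Rightarrow> 'a \<Rightarrow> (nat \<Rightarrow> 'a) \<Rightarrow> bool" where
  "forces_W_infinite P le q p \<longleftrightarrow>
     (\<forall>r\<in>P. le r q \<longrightarrow> (\<forall>m. \<exists>n\<ge>m. compat P le r (p n)))"

definition Fr_linked :: "'a set \<Rightarrow> ('a \<Rightarrow> 'a \<Rightarrow> bool) \<Rightarrow> 'a set \<Rightarrow> bool" where
  "Fr_linked P le Q \<longleftrightarrow> Q \<subseteq> P \<and>
     (\<forall>p. (\<forall>n. p n \<in> Q) \<longrightarrow> (\<exists>q\<in>P. forces_W_infinite P le q p))"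

text \<open>mu-Fr-linked, where mu is the cardinality of the index set Z.\<close>

definition mu_Fr_linked :: "'a set \<Rightarrow> ('a \<Rightarrow> 'a \<Rightarrow> bool) \<Rightarrow> 'z set \<Rightarrow> bool" where
  "mu_Fr_linked P le Z \<longleftrightarrow>
     (\<exists>F. (\<forall>z\<in>Z. Fr_linked P le (F z)) \<and> P = (\<Union>z\<in>Z. F z))"

definition fs_prod :: "'i set \<Rightarrow> ('i \<Rightarrow> 'a set) \<Rightarrow> ('i \<Rightarrow> 'a option) set" where
  "fs_prod I Q = {p. finite (dom p) \<and> dom p \<subseteq> I \<and> (\<forall>i\<in>dom p. the (p i) \<in> Q i)}"

definition fs_le :: "('i \<Rightarrow> 'a \<Rightarrow> 'a \<Rightarrow> bool) \<Rightarrow> ('i \<Rightarrow> 'a option) \<Rightarrow> ('i \<Rightarrow> 'a option) \<Rightarrow> bool" where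
  "fs_le le q p \<longleftrightarrow> dom p \<subseteq> dom q \<and> (\<forall>i\<in>dom p. le i (the (q i)) (the (p i)))"

definition full_prod :: "'i set \<Rightarrow> ('i \<Rightarrow> 'a set) \<Rightarrow> ('i \<Rightarrow> 'a option) set" where
  "full_prod u Q = {p. dom p = u \<and> (\<forall>i\<in>u. the (p i) \<in> Q i)}"

end

theory Submission
  imports Defs "HOL-Library.Infinite_Set" "HOL-Library.Equipollence"
begin

text \<open>By the Engelking--Karlowicz theorem, \<open>|I| \<le> 2\<^sup>\<mu>\<close> gives functions \<open>H\<^sub>\<zeta> : I \<rightarrow> \<mu>\<close>
  (\<open>\<zeta> < \<mu>\<close>) such that every finite partial function from \<open>I\<close> to \<open>\<mu>\<close> extends to some \<open>H\<^sub>\<zeta>\<close>.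
  Hence the pieces \<open>P\<^bsub>\<zeta>,k\<^esub>\<close> of all \<open>p\<close> with \<open>|dom p| = k\<close> and \<open>p(i) \<in> Q\<^bsub>i,H\<^sub>\<zeta>(i)\<^esub>\<close> for
  \<open>i \<in> dom p\<close> are \<open>\<mu> \<cdot> \<omega> = \<mu>\<close> sets covering the product. Each piece is Fr-linked: a sequence
  in it has a subsequence whose supports form a weak \<open>\<Delta>\<close>-system with root \<open>v\<close> (every index
  outside \<open>v\<close> lies in only finitely many supports), and by (ii) some \<open>q\<close> forces infinitely many
  restrictions \<open>p\<^sub>n|v\<close> into the generic filter of the product over \<open>v\<close>. The same \<open>q\<close> works
  in the whole product, because \<open>r \<le> q\<close> is compatible with \<open>p\<^sub>n\<close> as soon as \<open>r|v\<close> is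
  compatible with \<open>p\<^sub>n|v\<close> and \<open>dom r \<inter> dom p\<^sub>n = v\<close>, which holds for all large \<open>n\<close>.\<close>

lemma weak_delta_system:
  fixes A :: "nat \<Rightarrow> 'a set"
  assumes "\<And>n. finite (A n)" and "\<And>n. card (A n) \<le> k"
  obtains g :: "nat \<Rightarrow> nat" and v where "strict_mono g" and "\<And>n. v \<subseteq> A (g n)"
    and "\<And>i. i \<notin> v \<Longrightarrow> finite {n. i \<in> A (g n)}"
  using assms
proof (induction k arbitrary: A thesis)
  case 0
  have "A n = {}" for n using "0.prems"(2,3)[of n] by simp
  then show ?case by (intro "0.prems"(1)[of id "{}"]) (auto simp: strict_mono_def)
next
  case (Suc k)
  show ?case
  proof (cases "\<forall>i. finite {n. i \<in> A n}")
    case True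
    then show ?thesis by (intro Suc.prems(1)[of id "{}"]) (auto simp: strict_mono_def)
  next
    case False
    then obtain i where inf: "infinite {n. i \<in> A n}" by auto
    define e where "e = enumerate {n. i \<in> A n}"
    have e: "strict_mono e" unfolding e_def using inf by (rule strict_mono_enumerate)
    have i_in: "i \<in> A (e n)" for n
      using enumerate_in_set[OF inf, of n] unfolding e_def by simp
    have card_k: "card (A (e n) - {i}) \<le> k" for n
      using Suc.prems(3)[of "e n"] i_in[of n] by simp
    obtain g :: "nat \<Rightarrow> nat" and v where g: "strict_mono g" and root: "\<And>n. v \<subseteq> A (e (g n)) - {i}"
      and sparse: "\<And>j. j \<notin> v \<Longrightarrow> finite {n. j \<in> A (e (g n)) - {i}}"
      by (rule Suc.IH[of "\<lambda>n. A (e n) - {i}"]) (blast, simp_all add: Suc.prems(2) card_k)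
    show ?thesis
    proof (rule Suc.prems(1)[of "e \<circ> g" "insert i v"])
      show "strict_mono (e \<circ> g)" using e g by (simp add: strict_mono_def)
      show "insert i v \<subseteq> A ((e \<circ> g) n)" for n using root i_in by auto
      show "finite {n. j \<in> A ((e \<circ> g) n)}" if "j \<notin> insert i v" for j
        using sparse[of j] that by simp
    qed
  qed
qed

lemma lists_lepoll_infinite:
  assumes "infinite Z"
  shows "lists Z \<lesssim> Z"
proof -
  obtain z0 where "z0 \<in> Z" using assms infinite_imp_nonempty by blast
  have "Z \<times> Z \<lesssim> Z"
    unfolding lepoll_def card_of_ordLeq using card_of_Times_same_infinite[OF assms]
    by (rule ordIso_imp_ordLeq)
  also have "Z \<lesssim> Z - {z0}"
  proof -
    have "infinite (Z - {z0})" using assms by simp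
    then have "insert z0 (Z - {z0}) \<lesssim> Z - {z0}" by (rule infinite_insert_lepoll)
    then show ?thesis using \<open>z0 \<in> Z\<close> by (simp add: insert_absorb)
  qed
  finally obtain pair where pair: "inj_on pair (Z \<times> Z)" "pair ` (Z \<times> Z) \<subseteq> Z - {z0}"
    unfolding lepoll_def by blast
  define code where "code xs = foldr (\<lambda>x r. pair (x, r)) xs z0" for xs
  have code_simps [simp]: "code [] = z0" "code (x # xs) = pair (x, code xs)" for x xs
    by (simp_all add: code_def)
  have code_in: "code xs \<in> Z" if "xs \<in> lists Z" for xs
    using that \<open>z0 \<in> Z\<close> pair(2) by (induction xs) auto
  have "inj_on code (lists Z)"
  proof (rule inj_onI)
    fix xs ys assume "xs \<in> lists Z" "ys \<in> lists Z" "code xs = code ys"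
    then show "xs = ys"
    proof (induction xs arbitrary: ys)
      case Nil
      show ?case
      proof (cases ys)
        case (Cons y ys')
        then have "(y, code ys') \<in> Z \<times> Z" using Nil.prems Cons code_in[of ys'] by simp
        then show ?thesis using Nil.prems(2) Cons pair(2) by auto
      qed simp
    next
      case (Cons x xs)
      then have x: "x \<in> Z" and xs: "code xs \<in> Z" by (simp_all add: code_in)
      then have "code (x # xs) \<noteq> z0" using pair(2) by auto
      with Cons.prems obtain y ys' where ys: "ys = y # ys'"
        by (cases ys) auto
      have "(x, code xs) = (y, code ys')"
        using Cons.prems ys x xs code_in by (intro inj_onD[OF pair(1)]) auto
      then have "x = y" and "code xs = code ys'" by simp_all
      moreover have "xs = ys'"
        using \<open>code xs = code ys'\<close> Cons.prems ys by (intro Cons.IH) auto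
      ultimately show ?case using ys by simp
    qed
  qed
  with code_in show ?thesis unfolding lepoll_def by blast
qed

lemma finite_separating_subset:
  assumes "finite u" and "inj_on f u"
  obtains D where "finite D" and "D \<subseteq> (\<Union>i\<in>u. f i)" and "inj_on (\<lambda>i. f i \<inter> D) u"
proof -
  define pairs where "pairs = {(i, j) \<in> u \<times> u. i \<noteq> j}"
  have "\<forall>ij\<in>pairs. \<exists>z. z \<in> sym_diff (f (fst ij)) (f (snd ij))"
    using assms(2) unfolding pairs_def by (auto simp: inj_on_def)
  then obtain d where "\<forall>ij\<in>pairs. d ij \<in> sym_diff (f (fst ij)) (f (snd ij))"
    by (metis bchoice)
  then have d: "\<And>i j. (i, j) \<in> pairs \<Longrightarrow> d (i, j) \<in> sym_diff (f i) (f j)" by force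
  show ?thesis
  proof (rule that[of "d ` pairs"])
    have "pairs \<subseteq> u \<times> u" unfolding pairs_def by blast
    then show "finite (d ` pairs)"
      using assms(1) by (meson finite_SigmaI finite_imageI finite_subset)
    show "d ` pairs \<subseteq> (\<Union>i\<in>u. f i)" using d unfolding pairs_def by blast
    show "inj_on (\<lambda>i. f i \<inter> d ` pairs) u"
    proof (rule inj_onI, rule ccontr)
      fix i j assume "i \<in> u" "j \<in> u" "f i \<inter> d ` pairs = f j \<inter> d ` pairs" "i \<noteq> j"
      then have "(i, j) \<in> pairs" "d (i, j) \<in> d ` pairs" unfolding pairs_def by auto
      then show False using d \<open>f i \<inter> d ` pairs = f j \<inter> d ` pairs\<close> by blast
    qed
  qed
qed

text \<open>A code \<open>L\<close> is a list of entries \<open>z # ds\<close>. With \<open>D\<close> the union of all the \<open>ds\<close>, the index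
  \<open>i\<close> is decoded to the \<open>z\<close> of an entry whose \<open>ds\<close> lists the trace \<open>f i \<inter> D\<close>.\<close>

definition ek_decode :: "('i \<Rightarrow> 'z set) \<Rightarrow> 'z list list \<Rightarrow> 'i \<Rightarrow> 'z" where
  "ek_decode f L i =
    hd (SOME e. e \<in> set L \<and> e \<noteq> [] \<and> set (tl e) = f i \<inter> (\<Union>e'\<in>set L. set (tl e')))"

lemma ek_decode_extends:
  assumes "finite u" and "inj_on f u" and "f ` u \<subseteq> Pow Z" and "s ` u \<subseteq> Z"
  obtains L where "L \<in> lists (lists Z)" and "\<And>i. i \<in> u \<Longrightarrow> ek_decode f L i = s i"
proof -
  obtain D where "finite D" and D_sub: "D \<subseteq> (\<Union>i\<in>u. f i)" and sep: "inj_on (\<lambda>i. f i \<inter> D) u"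
    by (rule finite_separating_subset[OF assms(1,2)])
  have DZ: "D \<subseteq> Z" using D_sub assms(3) by blast
  have "\<exists>ds. set ds = f i \<inter> D" for i using finite_list[of "f i \<inter> D"] \<open>finite D\<close> by simp
  then obtain ds where ds: "\<And>i. set (ds i) = f i \<inter> D" by metis
  obtain xs where xs: "set xs = u" using finite_list[OF assms(1)] by blast
  define L where "L = map (\<lambda>i. s i # ds i) xs"
  have entries: "set L = (\<lambda>i. s i # ds i) ` u" unfolding L_def using xs by simp
  have trace: "f i \<inter> (\<Union>e\<in>set L. set (tl e)) = f i \<inter> D" if "i \<in> u" for i
    using that unfolding entries by (auto simp: ds)
  show ?thesis
  proof (rule that[of L])
    have "s i # ds i \<in> lists Z" if "i \<in> u" for i
      using that assms(4) DZ ds[of i] by auto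
    then show "L \<in> lists (lists Z)" unfolding in_lists_conv_set entries by blast
    fix i assume i: "i \<in> u"
    have unique: "e = s i # ds i"
      if e_in: "e \<in> set L" and e_trace: "set (tl e) = f i \<inter> (\<Union>e'\<in>set L. set (tl e'))" for e
    proof -
      obtain j where "j \<in> u" and e: "e = s j # ds j" using e_in unfolding entries by blast
      then have "f j \<inter> D = f i \<inter> D" using e_trace trace[OF i] ds by simp
      then have "j = i" using inj_onD[OF sep] \<open>j \<in> u\<close> i by blast
      then show ?thesis using e by simp
    qed
    have "s i # ds i \<in> set L" using i unfolding entries by blast
    moreover have "set (tl (s i # ds i)) = f i \<inter> (\<Union>e'\<in>set L. set (tl e'))"
      using trace[OF i] ds by simp
    ultimately have "(SOME e. e \<in> set L \<and> e \<noteq> [] \<and> set (tl e) = f i \<inter> (\<Union>e'\<in>set L. set (tl e')))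
        = s i # ds i"
      using unique by (intro some_equality) blast+
    then show "ek_decode f L i = s i" unfolding ek_decode_def by simp
  qed
qed

lemma engelking_karlowicz:
  assumes "infinite Z" and "inj_on f I" and "f ` I \<subseteq> Pow Z"
  obtains H :: "'z \<Rightarrow> 'i \<Rightarrow> 'z"
  where "\<And>u s. finite u \<Longrightarrow> u \<subseteq> I \<Longrightarrow> s ` u \<subseteq> Z \<Longrightarrow> \<exists>z\<in>Z. \<forall>i\<in>u. H z i = s i"
proof -
  have "lists (lists Z) \<lesssim> lists Z"
    using assms(1) by (intro lists_lepoll_mono lists_lepoll_infinite)
  also have "lists Z \<lesssim> Z" using assms(1) by (rule lists_lepoll_infinite)
  finally obtain c where c: "inj_on c (lists (lists Z))" "c ` lists (lists Z) \<subseteq> Z"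
    unfolding lepoll_def by blast
  show ?thesis
  proof (rule that[of "\<lambda>z. ek_decode f (inv_into (lists (lists Z)) c z)"])
    fix u s assume "finite u" "u \<subseteq> I" "s ` u \<subseteq> Z"
    moreover have "inj_on f u" using assms(2) \<open>u \<subseteq> I\<close> by (rule inj_on_subset)
    moreover have "f ` u \<subseteq> Pow Z" using assms(3) \<open>u \<subseteq> I\<close> by blast
    ultimately obtain L where L: "L \<in> lists (lists Z)" "\<And>i. i \<in> u \<Longrightarrow> ek_decode f L i = s i"
      by (metis ek_decode_extends)
    have "c L \<in> Z" using c(2) L(1) by blast
    moreover have "inv_into (lists (lists Z)) c (c L) = L" using c(1) L(1) by (rule inv_into_f_f)
    ultimately show "\<exists>z\<in>Z. \<forall>i\<in>u. ek_decode f (inv_into (lists (lists Z)) c z) i = s i"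
      using L(2) by metis
  qed
qed

lemma Fr_linkedD:
  assumes "Fr_linked P le Q" and "\<And>n. p n \<in> Q"
  shows "\<exists>q\<in>P. forces_W_infinite P le q p"
  using assms unfolding Fr_linked_def by blast

lemma forces_W_infinite_of_subseq:
  assumes "strict_mono g" and "forces_W_infinite P le q (p \<circ> g)"
  shows "forces_W_infinite P le q p"
  using assms unfolding forces_W_infinite_def
  by (metis comp_apply le_trans strict_mono_imp_increasing)

lemma fs_compat_if_compat_on_common_support:
  assumes reflexive: "\<And>i x. i \<in> I \<Longrightarrow> x \<in> Q i \<Longrightarrow> le i x x"
    and r: "r \<in> fs_prod I Q" and p: "p \<in> fs_prod I Q" and v: "dom r \<inter> dom p = v"
    and "compat (full_prod v Q) (fs_le le) (r |` v) (p |` v)"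
  shows "compat (fs_prod I Q) (fs_le le) r p"
proof -
  obtain t where t: "t \<in> full_prod v Q" "fs_le le t (r |` v)" "fs_le le t (p |` v)"
    using assms(5) unfolding compat_def by blast
  define w where "w i = (if i \<in> v then t i else if i \<in> dom r then r i else p i)" for i
  have "dom t = v" using t(1) unfolding full_prod_def by simp
  then have dom_w: "dom w = dom r \<union> dom p"
    using v unfolding w_def by (force split: if_splits)
  then have w: "w \<in> fs_prod I Q"
    using r p t(1) unfolding fs_prod_def full_prod_def w_def by auto
  have below_w: "fs_le le w x"
    if x: "x \<in> fs_prod I Q" "fs_le le t (x |` v)" "dom x \<subseteq> dom w"
      and outside: "\<And>i. i \<in> dom x - v \<Longrightarrow> w i = x i" for x
    unfolding fs_le_def
  proof (intro conjI ballI)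
    fix i assume "i \<in> dom x"
    show "le i (the (w i)) (the (x i))"
    proof (cases "i \<in> v")
      case True
      then show ?thesis using x(2) \<open>i \<in> dom x\<close> unfolding fs_le_def w_def by auto
    next
      case False
      have "i \<in> I" "the (x i) \<in> Q i" using x(1) \<open>i \<in> dom x\<close> unfolding fs_prod_def by auto
      then show ?thesis using reflexive outside[of i] \<open>i \<in> dom x\<close> False by simp
    qed
  qed (fact x(3))
  have "fs_le le w r" by (rule below_w) (use r t(2) dom_w in \<open>auto simp: w_def\<close>)
  moreover have "fs_le le w p" by (rule below_w) (use p t(3) dom_w v in \<open>auto simp: w_def\<close>)
  ultimately show ?thesis using w unfolding compat_def by blast
qed

lemma fs_prod_forces_W_infinite_if_root:
  assumes reflexive: "\<And>i x. i \<in> I \<Longrightarrow> x \<in> Q i \<Longrightarrow> le i x x"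
    and p: "\<And>n. p n \<in> fs_prod I Q" and root: "\<And>n. v \<subseteq> dom (p n)"
    and sparse: "\<And>i. i \<notin> v \<Longrightarrow> finite {n. i \<in> dom (p n)}"
    and q: "q \<in> full_prod v Q" "forces_W_infinite (full_prod v Q) (fs_le le) q (\<lambda>n. p n |` v)"
  shows "forces_W_infinite (fs_prod I Q) (fs_le le) q p"
  unfolding forces_W_infinite_def
proof (intro ballI impI allI)
  fix r m assume r: "r \<in> fs_prod I Q" and "fs_le le r q"
  have "dom q = v" using q(1) unfolding full_prod_def by simp
  then have "v \<subseteq> dom r" and "fs_le le (r |` v) q"
    using \<open>fs_le le r q\<close> unfolding fs_le_def by auto
  moreover have "r |` v \<in> full_prod v Q"
    using r \<open>v \<subseteq> dom r\<close> unfolding fs_prod_def full_prod_def by auto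
  ultimately have frequently_compat:
      "\<exists>n\<ge>m'. compat (full_prod v Q) (fs_le le) (r |` v) (p n |` v)" for m'
    using q(2) unfolding forces_W_infinite_def by blast
  have "finite (\<Union>i\<in>dom r - v. {n. i \<in> dom (p n)})"
    using r sparse unfolding fs_prod_def by auto
  then obtain M where "\<forall>n\<in>\<Union>i\<in>dom r - v. {n. i \<in> dom (p n)}. n < M"
    using finite_nat_set_iff_bounded by blast
  then have disjoint_off_root: "dom r \<inter> dom (p n) \<subseteq> v" if "n \<ge> M" for n
    using that by fastforce
  obtain n where "n \<ge> max m M" and "compat (full_prod v Q) (fs_le le) (r |` v) (p n |` v)"
    using frequently_compat by blast
  moreover have "dom r \<inter> dom (p n) = v"
    using disjoint_off_root[of n] \<open>n \<ge> max m M\<close> root[of n] \<open>v \<subseteq> dom r\<close> by auto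
  ultimately have "compat (fs_prod I Q) (fs_le le) r (p n)"
    using fs_compat_if_compat_on_common_support[where le = le, OF reflexive r p] by blast
  then show "\<exists>n\<ge>m. compat (fs_prod I Q) (fs_le le) r (p n)" using \<open>n \<ge> max m M\<close> by auto
qed

definition fs_piece ::
  "'i set \<Rightarrow> ('i \<Rightarrow> 'a set) \<Rightarrow> ('i \<Rightarrow> 'z \<Rightarrow> 'a set) \<Rightarrow> 'z set \<Rightarrow> ('i \<Rightarrow> 'z) \<Rightarrow> nat
    \<Rightarrow> ('i \<Rightarrow> 'a option) set" where
  "fs_piece I Q Qz Z h k =
    {p \<in> fs_prod I Q. card (dom p) = k \<and> (\<forall>i\<in>dom p. h i \<in> Z \<and> the (p i) \<in> Qz i (h i))}"

lemma fs_piece_Fr_linked: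
  fixes Q :: "'i \<Rightarrow> 'a set"
  assumes reflexive: "\<And>i x. i \<in> I \<Longrightarrow> x \<in> Q i \<Longrightarrow> le i x x"
    and prod_linked: "\<And>u s. finite u \<Longrightarrow> u \<subseteq> I \<Longrightarrow> s ` u \<subseteq> Z \<Longrightarrow>
        Fr_linked (full_prod u Q) (fs_le le) (full_prod u (\<lambda>i. Qz i (s i)))"
  shows "Fr_linked (fs_prod I Q) (fs_le le) (fs_piece I Q Qz Z h k)"
  unfolding Fr_linked_def
proof (intro conjI allI impI)
  show "fs_piece I Q Qz Z h k \<subseteq> fs_prod I Q" unfolding fs_piece_def by blast
  fix p :: "nat \<Rightarrow> 'i \<Rightarrow> 'a option" assume "\<forall>n. p n \<in> fs_piece I Q Qz Z h k"
  then have p: "p n \<in> fs_prod I Q" and card: "card (dom (p n)) \<le> k"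
    and p_h: "\<forall>i\<in>dom (p n). h i \<in> Z \<and> the (p n i) \<in> Qz i (h i)" for n
    unfolding fs_piece_def by auto
  have fin: "finite (dom (p n))" and dom_I: "dom (p n) \<subseteq> I" for n
    using p unfolding fs_prod_def by auto
  obtain g :: "nat \<Rightarrow> nat" and v where g: "strict_mono g" and root: "\<And>n. v \<subseteq> dom (p (g n))"
    and sparse: "\<And>i. i \<notin> v \<Longrightarrow> finite {n. i \<in> dom (p (g n))}"
    by (rule weak_delta_system[of "\<lambda>n. dom (p n)" k, OF fin card]) (rule that)
  have "finite v" using root[of 0] fin[of "g 0"] by (rule finite_subset)
  moreover have "v \<subseteq> I" using root[of 0] dom_I[of "g 0"] by (rule order_trans)
  moreover have "h ` v \<subseteq> Z" using root[of 0] p_h[of "g 0"] by blast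
  ultimately have root_linked:
      "Fr_linked (full_prod v Q) (fs_le le) (full_prod v (\<lambda>i. Qz i (h i)))"
    by (rule prod_linked)
  have restricted: "p (g n) |` v \<in> full_prod v (\<lambda>i. Qz i (h i))" for n
    using root[of n] p_h[of "g n"] unfolding full_prod_def by auto
  obtain q where q: "q \<in> full_prod v Q"
    and forces: "forces_W_infinite (full_prod v Q) (fs_le le) q (\<lambda>n. p (g n) |` v)"
    using Fr_linkedD[OF root_linked, of "\<lambda>n. p (g n) |` v"] restricted by blast
  show "\<exists>q\<in>fs_prod I Q. forces_W_infinite (fs_prod I Q) (fs_le le) q p"
  proof (intro bexI)
    show "q \<in> fs_prod I Q"
      using q \<open>finite v\<close> \<open>v \<subseteq> I\<close> unfolding full_prod_def fs_prod_def by auto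
    have "forces_W_infinite (fs_prod I Q) (fs_le le) q (p \<circ> g)"
      using fs_prod_forces_W_infinite_if_root[where p = "p \<circ> g" and le = le, OF reflexive _ _ _ q]
        p root sparse forces by (simp add: comp_def)
    then show "forces_W_infinite (fs_prod I Q) (fs_le le) q p"
      using g by (rule forces_W_infinite_of_subseq[rotated])
  qed
qed

lemma mu_Fr_linked_Times_nat:
  fixes F :: "'z \<Rightarrow> nat \<Rightarrow> 'p set"
  assumes "infinite Z" and "P = (\<Union>z\<in>Z. \<Union>k. F z k)"
    and "\<And>z k. z \<in> Z \<Longrightarrow> Fr_linked P le (F z k)"
  shows "mu_Fr_linked P le Z"
proof -
  have "Z \<times> (UNIV :: nat set) \<approx> Z"
    unfolding eqpoll_iff_card_of_ordIso
    using assms(1) card_of_Times_infinite[of Z "UNIV :: nat set"] infinite_iff_card_of_nat by blast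
  then obtain b where b: "bij_betw b Z (Z \<times> (UNIV :: nat set))"
    unfolding eqpoll_def using bij_betw_inv by blast
  show ?thesis
    unfolding mu_Fr_linked_def
  proof (intro exI conjI)
    show "\<forall>z\<in>Z. Fr_linked P le (case_prod F (b z))"
    proof
      fix z assume "z \<in> Z"
      then have "fst (b z) \<in> Z" using bij_betwE[OF b] by fastforce
      then show "Fr_linked P le (case_prod F (b z))" using assms(3) by (simp add: case_prod_beta)
    qed
    have "(\<Union>z\<in>Z. case_prod F (b z)) = (\<Union>zk\<in>Z \<times> UNIV. case_prod F zk)"
      using b by (simp add: bij_betw_def image_image[symmetric])
    then show "P = (\<Union>z\<in>Z. case_prod F (b z))" using assms(2) by auto
  qed
qed

lemma fs_prod_eq_Union_fs_piece:
  assumes cover: "\<forall>i\<in>I. Q i = (\<Union>\<zeta>\<in>Z. Qz i \<zeta>)"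
    and H: "\<And>u s. finite u \<Longrightarrow> u \<subseteq> I \<Longrightarrow> s ` u \<subseteq> Z \<Longrightarrow> \<exists>z\<in>Z. \<forall>i\<in>u. H z i = s i"
  shows "fs_prod I Q = (\<Union>z\<in>Z. \<Union>k. fs_piece I Q Qz Z (H z) k)"
proof
  show "(\<Union>z\<in>Z. \<Union>k. fs_piece I Q Qz Z (H z) k) \<subseteq> fs_prod I Q"
    unfolding fs_piece_def by blast
  show "fs_prod I Q \<subseteq> (\<Union>z\<in>Z. \<Union>k. fs_piece I Q Qz Z (H z) k)"
  proof
    fix p assume p: "p \<in> fs_prod I Q"
    then have "finite (dom p)" and "dom p \<subseteq> I" unfolding fs_prod_def by auto
    have choice: "\<forall>i\<in>dom p. \<exists>\<zeta>. \<zeta> \<in> Z \<and> the (p i) \<in> Qz i \<zeta>"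
    proof
      fix i assume "i \<in> dom p"
      then have "i \<in> I" and "the (p i) \<in> Q i" using p unfolding fs_prod_def by auto
      then show "\<exists>\<zeta>. \<zeta> \<in> Z \<and> the (p i) \<in> Qz i \<zeta>" using cover by auto
    qed
    obtain s where s: "\<forall>i\<in>dom p. s i \<in> Z \<and> the (p i) \<in> Qz i (s i)"
      using bchoice[OF choice] by blast
    then have "s ` dom p \<subseteq> Z" by blast
    then obtain z where "z \<in> Z" and "\<forall>i\<in>dom p. H z i = s i"
      using H[OF \<open>finite (dom p)\<close> \<open>dom p \<subseteq> I\<close>] by blast
    then have "p \<in> fs_piece I Q Qz Z (H z) (card (dom p))"
      using p s unfolding fs_piece_def by simp
    with \<open>z \<in> Z\<close> show "p \<in> (\<Union>z\<in>Z. \<Union>k. fs_piece I Q Qz Z (H z) k)" by blast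
  qed
qed

theorem theorem3p22:
  fixes I :: "'i set" and Z :: "'z set"
    and Q :: "'i \<Rightarrow> 'a set" and le :: "'i \<Rightarrow> 'a \<Rightarrow> 'a \<Rightarrow> bool"
    and Qz :: "'i \<Rightarrow> 'z \<Rightarrow> 'a set"
  assumes mu_inf: "infinite Z"
    and posets: "\<forall>i\<in>I. poset (Q i) (le i)"
    and cover: "\<forall>i\<in>I. Q i = (\<Union>\<zeta>\<in>Z. Qz i \<zeta>)"
    and linked: "\<forall>i\<in>I. \<forall>\<zeta>\<in>Z. Fr_linked (Q i) (le i) (Qz i \<zeta>)"
    and card_I: "\<exists>f. inj_on f I \<and> f ` I \<subseteq> Pow Z"
    and prod_linked: "\<forall>u s. finite u \<longrightarrow> u \<subseteq> I \<longrightarrow> s ` u \<subseteq> Z \<longrightarrow>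
        Fr_linked (full_prod u Q) (fs_le le) (full_prod u (\<lambda>i. Qz i (s i)))"
  shows "mu_Fr_linked (fs_prod I Q) (fs_le le) Z"
proof -
  obtain f where "inj_on f I" and "f ` I \<subseteq> Pow Z" using card_I by blast
  then obtain H :: "'z \<Rightarrow> 'i \<Rightarrow> 'z"
    where H: "\<And>u s. finite u \<Longrightarrow> u \<subseteq> I \<Longrightarrow> s ` u \<subseteq> Z \<Longrightarrow> \<exists>z\<in>Z. \<forall>i\<in>u. H z i = s i"
    by (rule engelking_karlowicz[OF mu_inf]) (rule that)
  have reflexive: "\<And>i x. i \<in> I \<Longrightarrow> x \<in> Q i \<Longrightarrow> le i x x"
    using posets unfolding poset_def by blast
  have pieces_linked: "Fr_linked (fs_prod I Q) (fs_le le) (fs_piece I Q Qz Z (H z) k)" for z k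
    using reflexive prod_linked[rule_format] by (rule fs_piece_Fr_linked)
  show ?thesis
    by (rule mu_Fr_linked_Times_nat[OF mu_inf fs_prod_eq_Union_fs_piece[OF cover H] pieces_linked])
qed

end
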